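(* Consider the minimum time problem with the time-invariant dynamics $\dot y(t)=\bar Ay(t)+\bar Bu(t)$, $u(t)\in[-1,1]^m$, $y(0)=0$ in $\mathbb{R}^n$ (with $\bar A=-A$, $\bar B=-B$), under the setting in the context. Assume the normality condition $$\operatorname{rank}\{B\omega,AB\omega,\dots,A^{n-1}B\omega\}=n$$ for each nonzero vector $\omega$ along an edge of $U=[-1,1]^m$ (or, if $m=1$, for $\omega$ the two end points of $U=[-1,1]$). Then for any $i\in\{1,\dots,K\}$, $$\int_0^{t_i}\|\hat u(t)-\hat u_h(t)\|_1\,dt\to0\quad\text{as }h\to0.$$
   Context: Here $A\in\mathbb{R}^{n\times n}$, $B\in\mathbb{R}^{n\times m}$ are constant, the target is $\mathcal{S}=\{0\}$, $U=[-1,1]^m$, $t_0=0$, $\|x\|_1=\sum_\mu|x_\mu|$. Fix $t_f>0$, integers $K,N$, $\Delta t=t_f/K$, $h=\Delta t/N$, $t_k=k\Delta t$, $t_{kj}=t_k+jh$ ($j=0,\dots,N$), $t_{k0}=t_{(k-1)N}$. $\mathcal{R}(t_i)$ denotes the (convex compact) reachable set at time $t_i$ of the system $\dot y=\bar Ay+\bar Bu$, $u(t)\in U$ measurable, $y(0)=0$, and $\mathcal{R}_{h\Delta}(t_i)$ its fully discrete approximation: with matrices $\Phi_h(s,r)$ approximating $e^{\bar A(s-r)}$ (one-step method, semigroup property $\Phi_h(s,r)=\Phi_h(s,q)\Phi_h(q,r)$), weights $c_{kj}\ge0$, finite direction sets $S^\Delta_{\mathcal{R}}\subset S_{n-1}$,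 $S^\Delta_U\subset S_{m-1}$ and supporting points $y(l,A)\in\arg\max_{a\in A}\langle l,a\rangle$: $Y_{h\Delta}(t_0)=\{0\}$, $\tilde Y(t_{k+1})=\Phi_h(t_{k+1},t_k)Y_{h\Delta}(t_k)+h\sum_jc_{(k+1)j}\Phi_h(t_{k+1},t_{kj})\bar B\{y(\eta,U):\eta\in S^\Delta_U\}$, $Y_{h\Delta}(t_{k+1})=\{y(l,\operatorname{co}\tilde Y(t_{k+1})):l\in S^\Delta_{\mathcal{R}}\}$, $\mathcal{R}_{h\Delta}(t_k)=\operatorname{co}Y_{h\Delta}(t_k)$; it is assumed that $d_H(\mathcal{R}_{h\Delta}(t_i),\mathcal{R}(t_i))\to0$ as $h\downarrow 0$. Adjoints (row vectors): $\eta(\cdot)$ solves $\dot\eta=-\eta\bar A$, $\eta(t_i)=\zeta$; the discrete adjoint solves $\eta_{(i-1)N}=\zeta_h$, $\eta_{k(j-1)}=\eta_{kj}\Phi_h(t_{kj},t_{k(j-1)})$ for $k=i-1,\dots,0$, $j=N,\dots,1$. The end values are chosen nontrivial with $\zeta_h\in N_{\mathcal{R}_{h\Delta}(t_i)}(y_{(i-1)N})$, $\zeta\in N_{\mathcal{R}(t_i)}(y(t_i))$ and $(y_{(i-1)N},\zeta_h)\to(y(t_i),\zeta)$ as $h\downarrow0$ (possible by graphical convergence of these normal cones), where $N_C(x)=\{v:\langle v,c-x\rangle\le0\ \forall c\in C\}$; consequently $\eta_{kj}\to\eta(t_{kj})$ uniformly in $j$. With $\operatorname{sign}$ applied componentwise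 ($1$ if positive, $0$ if zero, $-1$ if negative), define $\hat u(t)=\operatorname{sign}(\eta(t)\bar B)^\top$ on $[0,t_i]$, and $\hat u_h(t)=\hat u_{kj}:=\operatorname{sign}(\eta_{kj}\bar B)^\top$ for $t\in[t_{kj},t_{k(j+1)})$, $k=0,\dots,i-1$, $j=0,\dots,N-1$, with $\hat u_h(t_{(i-1)N})=\hat u_{(i-1)(N-1)}$. *)

theory Defs
  imports "HOL-Analysis.Analysis"
begin

definition sgnvec :: "real^'m \<Rightarrow> real^'m" where
  "sgnvec v = (\<chi> \<mu>. sgn (v $ \<mu>))"

definition norm1 :: "real^'m \<Rightarrow> real" where
  "norm1 v = (\<Sum>\<mu>\<in>UNIV. \<bar>v $ \<mu>\<bar>)"

text \<open>Normality condition: for every nonzero vector omega along an edge of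
  the cube [-1,1]^m (i.e. omega = c e_mu, c nonzero), the vectors
  B omega, A B omega, ..., A^(n-1) B omega have rank n.\<close>
definition normality_cond :: "real^'n^'n \<Rightarrow> real^'m^'n \<Rightarrow> bool" where
  "normality_cond A B \<longleftrightarrow>
     (\<forall>(\<mu>::'m) (c::real). c \<noteq> 0 \<longrightarrow>
        dim (span {((\<lambda>x. A *v x) ^^ k) (B *v axis \<mu> c) | k. k < CARD('n)}) = CARD('n))"

definition hstep :: "real \<Rightarrow> nat \<Rightarrow> nat \<Rightarrow> real" where
  "hstep tf K N = tf / real K / real N"

text \<open>Discrete control u_h: with flattened grid index p = k N + j (so t_kj = p h),
  u_h(t) = sign(eta_p Bbar) on [p h, (p+1) h) for p < i N, and at t = t_i the
  value of the last interval is used.\<close>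
definition uhat_h :: "(nat \<Rightarrow> real^'n) \<Rightarrow> real^'m^'n \<Rightarrow> real \<Rightarrow> nat \<Rightarrow> nat \<Rightarrow> real \<Rightarrow> real^'m" where
  "uhat_h etad Bbar h i N t = sgnvec (etad (min (nat \<lfloor>t / h\<rfloor>) (i * N - 1)) v* Bbar)"

end

theory Submission
  imports Defs
begin

text \<open>
  The adjoint \<open>\<eta>\<close> solves a linear ODE and is nonzero at \<open>t\<^sub>i\<close>, so by Gronwall it never
  vanishes. By the normality condition the vectors \<open>A\<^sup>k B e\<^sub>\<mu>\<close> span \<open>\<real>\<^sup>n\<close>, so at every
  time one of the derivatives \<open>\<eta>(t) A\<^sup>k B e\<^sub>\<mu>\<close> of the switching function
  \<open>\<eta>(t) B e\<^sub>\<mu>\<close> is nonzero. Descending the chain of derivatives with Rolle's theorem, every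
  zero of the switching function is isolated, hence there are only finitely many of them. Away
  from these zeros the discrete adjoint, sampled on the grid, converges to \<open>\<eta>(t)\<close>, so the
  discrete and the exact controls eventually agree. The integrand is bounded by \<open>2m\<close>, and
  dominated convergence concludes.
\<close>

lemma vector_matrix_mult_uminus_right: "x v* (- M) = - (x v* M)"
  for x :: "real^'n" and M :: "real^'m^'n"
  by (simp add: vector_matrix_mult_def vec_eq_iff sum_negf)

lemma vector_matrix_mult_component: "(x v* M) $ \<mu> = x \<bullet> (M *v axis \<mu> 1)"
  for x :: "real^'n" and M :: "real^'m^'n"
  using dot_lmul_matrix[of x M "axis \<mu> 1"] by (simp add: inner_axis)

lemma bounded_linear_vector_matrix_mult: "bounded_linear (\<lambda>x. x v* M)"
  for M :: "real^'m^'n"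
proof -
  have "(\<lambda>x. x v* M) = (\<lambda>x. transpose M *v x)" by simp
  then show ?thesis by (metis matrix_vector_mul_bounded_linear)
qed

lemma linear_ode_solution_nonzero:
  fixes y :: "real \<Rightarrow> 'a::real_inner" and L :: "'a \<Rightarrow> 'a"
  assumes L: "bounded_linear L"
    and ode: "\<And>s. s \<in> {a..b} \<Longrightarrow> (y has_vector_derivative L (y s)) (at s within {a..b})"
    and end_nonzero: "y b \<noteq> 0" and t: "t \<in> {a..b}"
  shows "y t \<noteq> 0"
proof
  assume y0: "y t = 0"
  obtain C where "C > 0" and C: "\<And>x. norm (L x) \<le> norm x * C"
    using bounded_linear.pos_bounded[OF L] by blast
  \<comment> \<open>Gronwall: the damped energy \<open>h\<close> is nonincreasing, yet \<open>h t = 0 < h b\<close>.\<close>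
  define h where "h s = (y s \<bullet> y s) * exp (- (2 * C) * s)" for s
  have dh: "(h has_real_derivative (2 * (y s \<bullet> L (y s)) - 2 * C * (y s \<bullet> y s)) * exp (- (2 * C) * s))
      (at s within {a..b})" if "s \<in> {a..b}" for s
  proof -
    have "((\<lambda>s. y s \<bullet> y s) has_real_derivative 2 * (y s \<bullet> L (y s))) (at s within {a..b})"
      using bounded_bilinear.has_vector_derivative[OF bounded_bilinear_inner ode ode, OF that that]
      by (simp add: has_real_derivative_iff_has_vector_derivative inner_commute)
    moreover have "((\<lambda>s. exp (- (2 * C) * s)) has_real_derivative exp (- (2 * C) * s) * (- (2 * C)))
        (at s within {a..b})"
      by (auto intro!: derivative_eq_intros)
    ultimately have "(h has_real_derivative (y s \<bullet> y s) * (exp (- (2 * C) * s) * (- (2 * C)))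
        + 2 * (y s \<bullet> L (y s)) * exp (- (2 * C) * s)) (at s within {a..b})"
      unfolding h_def by (rule DERIV_mult')
    then show ?thesis by (rule DERIV_cong) (simp add: algebra_simps)
  qed
  have energy_bound: "2 * (y s \<bullet> L (y s)) - 2 * C * (y s \<bullet> y s) \<le> 0" for s
  proof -
    have "y s \<bullet> L (y s) \<le> norm (y s) * (norm (y s) * C)"
      using norm_cauchy_schwarz[of "y s" "L (y s)"] mult_left_mono[OF C[of "y s"] norm_ge_zero[of "y s"]]
      by linarith
    then show ?thesis by (simp add: power2_norm_eq_inner[symmetric] power2_eq_square mult_ac)
  qed
  have "continuous_on {a..b} h"
    using dh by (meson DERIV_continuous continuous_on_eq_continuous_within)
  then have "h b \<le> h t"
  proof (intro DERIV_nonpos_imp_decreasing_open[of t b h])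
    fix s assume s: "t < s" "s < b"
    then have "at s within {a..b} = at s" using t by (intro at_within_Icc_at) auto
    then show "\<exists>d. (h has_real_derivative d) (at s) \<and> d \<le> 0"
      using dh[of s] s t energy_bound[of s] by (auto intro!: mult_nonpos_nonneg)
  qed (use t in \<open>auto elim: continuous_on_subset\<close>)
  moreover have "h t = 0" using y0 by (simp add: h_def)
  moreover have "h b > 0" using end_nonzero by (simp add: h_def)
  ultimately show False by simp
qed

lemma Rolle_within_Icc:
  fixes g g' :: "real \<Rightarrow> real"
  assumes deriv: "\<And>t. t \<in> {a..b} \<Longrightarrow> (g has_real_derivative g' t) (at t within {a..b})"
    and "a \<le> x" "x < y" "y \<le> b" "g x = g y"
  obtains z where "x < z" "z < y" "g' z = 0"
proof -
  have "continuous_on {a..b} g"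
    using deriv by (meson DERIV_continuous continuous_on_eq_continuous_within)
  then have "\<exists>z. x < z \<and> z < y \<and> (*) (g' z) = (\<lambda>v. 0)"
  proof (intro Rolle_deriv[OF \<open>x < y\<close> \<open>g x = g y\<close>])
    fix z assume z: "x < z" "z < y"
    then have "at z within {a..b} = at z" using assms by (intro at_within_Icc_at) auto
    then show "(g has_derivative (*) (g' z)) (at z)"
      using deriv[of z] z assms by (simp add: has_field_derivative_def)
  qed (use assms in \<open>auto elim: continuous_on_subset\<close>)
  then show thesis using that by (metis mult_1_right)
qed

lemma eventually_nonzero_if_derivative_eventually_nonzero:
  fixes g g' :: "real \<Rightarrow> real"
  assumes deriv: "\<And>t. t \<in> {a..b} \<Longrightarrow> (g has_real_derivative g' t) (at t within {a..b})"
    and "\<forall>\<^sub>F t in at t0 within {a..b}. g' t \<noteq> 0"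
  shows "\<forall>\<^sub>F t in at t0 within {a..b}. g t \<noteq> 0"
proof -
  obtain \<delta> where "\<delta> > 0" and \<delta>: "\<And>t. t \<in> {a..b} \<Longrightarrow> t \<noteq> t0 \<Longrightarrow> dist t t0 < \<delta> \<Longrightarrow> g' t \<noteq> 0"
    using assms(2) unfolding eventually_at by blast
  define Z where "Z = {t \<in> {a..b}. t \<noteq> t0 \<and> dist t t0 < \<delta> \<and> g t = 0}"
  have one_zero_per_side: False if "x \<in> Z" "y \<in> Z" "x < y" "x < t0 \<longleftrightarrow> y < t0" for x y
  proof -
    have "a \<le> x" "y \<le> b" "g x = g y" using that unfolding Z_def by auto
    then obtain z where z: "x < z" "z < y" "g' z = 0"
      using Rolle_within_Icc[OF deriv _ \<open>x < y\<close>] by blast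
    then have "z \<in> {a..b}" "z \<noteq> t0" "dist z t0 < \<delta>"
      using that unfolding Z_def by (auto simp: dist_real_def)
    then show False using \<delta> z(3) by blast
  qed
  have subsingleton_finite: "finite S" if "\<And>x y. x \<in> S \<Longrightarrow> y \<in> S \<Longrightarrow> x = y" for S :: "real set"
    using that by (metis finite.simps is_singletonI' is_singleton_the_elem)
  have "finite (Z \<inter> {..<t0})"
    by (rule subsingleton_finite) (metis IntE lessThan_iff linorder_neqE_linordered_idom one_zero_per_side)
  moreover have "finite (Z \<inter> {t0<..})"
    by (rule subsingleton_finite) (metis IntE greaterThan_iff linorder_neqE_linordered_idom one_zero_per_side order.asym)
  moreover have "Z = Z \<inter> {..<t0} \<union> Z \<inter> {t0<..}" unfolding Z_def by auto
  ultimately have "finite Z" by (metis finite_Un)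
  then have "\<forall>\<^sub>F t in at t0. t \<notin> Z"
    using islimpt_finite islimpt_iff_eventually by blast
  then have "\<forall>\<^sub>F t in at t0 within {a..b}. t \<notin> Z"
    by (rule filter_leD[OF at_le[OF subset_UNIV]])
  moreover have "\<forall>\<^sub>F t in at t0 within {a..b}. t \<in> {a..b} \<and> t \<noteq> t0 \<and> dist t t0 < \<delta>"
    unfolding eventually_at using \<open>\<delta> > 0\<close> by auto
  ultimately show ?thesis by eventually_elim (auto simp: Z_def)
qed

lemma finite_zeros_if_some_derivative_nonzero:
  fixes \<psi> :: "nat \<Rightarrow> real \<Rightarrow> real"
  assumes deriv: "\<And>k t. t \<in> {a..b} \<Longrightarrow> (\<psi> k has_real_derivative \<psi> (Suc k) t) (at t within {a..b})"
    and nonzero: "\<And>t. t \<in> {a..b} \<Longrightarrow> \<exists>k. \<psi> k t \<noteq> 0"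
  shows "finite {t \<in> {a..b}. \<psi> 0 t = 0}"
proof -
  have isolated: "\<forall>\<^sub>F t in at t0 within {a..b}. \<psi> 0 t \<noteq> 0" if t0: "t0 \<in> {a..b}" for t0
  proof -
    obtain k where "\<psi> k t0 \<noteq> 0" using nonzero[OF t0] by blast
    moreover have "(\<psi> k \<longlongrightarrow> \<psi> k t0) (at t0 within {a..b})"
      using DERIV_continuous[OF deriv[OF t0]] by (simp add: continuous_within)
    ultimately have k_nonzero: "\<forall>\<^sub>F t in at t0 within {a..b}. \<psi> k t \<noteq> 0"
      using tendsto_imp_eventually_ne by blast
    have "\<forall>\<^sub>F t in at t0 within {a..b}. \<psi> j t \<noteq> 0" if "j \<le> k" for j
      using that
    proof (induction rule: inc_induct)
      case base
      show ?case by (fact k_nonzero)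
    next
      case (step j)
      then show ?case using eventually_nonzero_if_derivative_eventually_nonzero[OF deriv] by blast
    qed
    then show ?thesis by blast
  qed
  have "\<not> t0 islimpt {t \<in> {a..b}. \<psi> 0 t = 0}" if "t0 \<in> {a..b}" for t0
    using isolated[OF that] unfolding islimpt_approachable eventually_at by fastforce
  then have "finite ({a..b} \<inter> {t \<in> {a..b}. \<psi> 0 t = 0})"
    by (intro finite_not_islimpt_in_compact) auto
  moreover have "{a..b} \<inter> {t \<in> {a..b}. \<psi> 0 t = 0} = {t \<in> {a..b}. \<psi> 0 t = 0}" by blast
  ultimately show ?thesis by simp
qed

lemma normality_cond_span_UNIV:
  fixes A :: "real^'n^'n" and B :: "real^'m^'n"
  assumes "normality_cond A B"
  shows "span {((\<lambda>x. A *v x) ^^ k) (B *v axis \<mu> 1) | k. k < CARD('n)} = UNIV"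
proof -
  have "dim {((\<lambda>x. A *v x) ^^ k) (B *v axis \<mu> (1::real)) | k. k < CARD('n)} = DIM(real^'n)"
    using assms[unfolded normality_cond_def, rule_format, of 1 \<mu>] by simp
  then show ?thesis by (simp only: dim_eq_full)
qed

lemma switching_function_finite_zeros:
  fixes \<eta> :: "real \<Rightarrow> real^'n" and A :: "real^'n^'n" and B :: "real^'m^'n"
  assumes ode: "\<And>t. t \<in> {a..b} \<Longrightarrow> (\<eta> has_vector_derivative \<eta> t v* A) (at t within {a..b})"
    and nonzero: "\<And>t. t \<in> {a..b} \<Longrightarrow> \<eta> t \<noteq> 0"
    and normal: "normality_cond A B"
  shows "finite {t \<in> {a..b}. (\<eta> t v* B) $ \<mu> = 0}"
proof -
  define w where "w k = ((\<lambda>x. A *v x) ^^ k) (B *v axis \<mu> 1)" for k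
  define \<psi> where "\<psi> = (\<lambda>k t. \<eta> t \<bullet> w k)"
  have "(\<psi> k has_real_derivative \<psi> (Suc k) t) (at t within {a..b})" if "t \<in> {a..b}" for k t
  proof -
    have "((\<lambda>t. \<eta> t \<bullet> w k) has_vector_derivative (\<eta> t v* A) \<bullet> w k) (at t within {a..b})"
      using bounded_linear.has_vector_derivative[OF bounded_linear_inner_left ode[OF that]] .
    then show ?thesis
      by (simp add: \<psi>_def w_def dot_lmul_matrix has_real_derivative_iff_has_vector_derivative)
  qed
  moreover have "\<exists>k. \<psi> k t \<noteq> 0" if "t \<in> {a..b}" for t
  proof (rule ccontr)
    assume "\<nexists>k. \<psi> k t \<noteq> 0"
    then have "orthogonal (\<eta> t) x" if "x \<in> span {w k | k. k < CARD('n)}" for x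
      using orthogonal_to_span[OF that] by (auto simp: \<psi>_def orthogonal_def)
    then have "orthogonal (\<eta> t) (\<eta> t)"
      using normality_cond_span_UNIV[OF normal] by (simp add: w_def)
    then show False using nonzero[OF that] by (simp add: orthogonal_def)
  qed
  ultimately have "finite {t \<in> {a..b}. \<psi> 0 t = 0}"
    by (rule finite_zeros_if_some_derivative_nonzero)
  then show ?thesis by (simp add: \<psi>_def w_def vector_matrix_mult_component)
qed

lemma floor_grid_index_approx:
  fixes h t :: real and M :: nat
  assumes h: "h > 0" and M: "M \<ge> 1" and t: "t \<in> {0..real M * h}"
  defines "p \<equiv> min (nat \<lfloor>t / h\<rfloor>) (M - 1)"
  shows "real p * h \<in> {0..real M * h}" and "\<bar>real p * h - t\<bar> \<le> h"
proof -
  define q where "q = nat \<lfloor>t / h\<rfloor>"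
  have "real q = of_int \<lfloor>t / h\<rfloor>" using t h by (simp add: q_def)
  then have "real q \<le> t / h" "t / h < real q + 1" by linarith+
  then have q_le: "real q * h \<le> t" and lt_q: "t < real q * h + h"
    using h by (simp_all add: field_simps)
  have "real p * h \<in> {0..real M * h} \<and> \<bar>real p * h - t\<bar> \<le> h"
  proof (cases "q \<le> M - 1")
    case True
    then have "p = q" by (simp add: p_def q_def)
    moreover have "real q * h \<le> real M * h" using True h by (intro mult_right_mono) auto
    ultimately show ?thesis using q_le lt_q t h by auto
  next
    case False
    \<comment> \<open>The cap \<open>M - 1\<close> is active only at the right end point \<open>t = M h\<close>.\<close>
    then have "real M * h \<le> real q * h" using h by (intro mult_right_mono) auto
    then have "t = real M * h" using q_le t by simp
    moreover have "p = M - 1" using False by (simp add: p_def q_def)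
    ultimately show ?thesis using M h by (simp add: algebra_simps)
  qed
  then show "real p * h \<in> {0..real M * h}" "\<bar>real p * h - t\<bar> \<le> h" by auto
qed

lemma tendsto_grid_sample:
  fixes y :: "real \<Rightarrow> 'a::real_normed_vector" and yd :: "nat \<Rightarrow> nat \<Rightarrow> 'a"
  assumes cont: "continuous_on {0..T} y" and h: "h \<longlonglongrightarrow> 0"
    and grid: "\<forall>\<^sub>F N in sequentially. 0 < h N \<and> 1 \<le> M N \<and> real (M N) * h N = T"
    and unif: "\<And>\<epsilon>. \<epsilon> > 0 \<Longrightarrow> \<forall>\<^sub>F N in sequentially. \<forall>p \<le> M N. norm (yd N p - y (real p * h N)) < \<epsilon>"
    and t: "t \<in> {0..T}"
  shows "(\<lambda>N. yd N (min (nat \<lfloor>t / h N\<rfloor>) (M N - 1))) \<longlonglongrightarrow> y t"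
proof (rule tendstoI)
  fix \<epsilon> :: real assume "\<epsilon> > 0"
  then obtain \<delta> where "\<delta> > 0" and \<delta>: "\<And>s. s \<in> {0..T} \<Longrightarrow> dist s t < \<delta> \<Longrightarrow> dist (y s) (y t) < \<epsilon> / 2"
    using cont t unfolding continuous_on_iff by (metis half_gt_zero)
  have "\<forall>\<^sub>F N in sequentially. h N < \<delta>" using order_tendstoD(2)[OF h \<open>\<delta> > 0\<close>] .
  moreover note grid
  moreover have "\<forall>\<^sub>F N in sequentially. \<forall>p \<le> M N. norm (yd N p - y (real p * h N)) < \<epsilon> / 2"
    using \<open>\<epsilon> > 0\<close> by (intro unif) simp
  ultimately show "\<forall>\<^sub>F N in sequentially. dist (yd N (min (nat \<lfloor>t / h N\<rfloor>) (M N - 1))) (y t) < \<epsilon>"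
  proof eventually_elim
    case (elim N)
    define p where "p = min (nat \<lfloor>t / h N\<rfloor>) (M N - 1)"
    have "real p * h N \<in> {0..T}" "\<bar>real p * h N - t\<bar> \<le> h N"
      using floor_grid_index_approx[of "h N" "M N" t] elim t unfolding p_def by auto
    then have "dist (y (real p * h N)) (y t) < \<epsilon> / 2"
      using \<delta> elim(1) by (simp add: dist_real_def)
    moreover have "dist (yd N p) (y (real p * h N)) < \<epsilon> / 2"
      using elim(3) by (simp add: p_def dist_norm)
    ultimately show ?case
      using dist_triangle[of "yd N p" "y t" "y (real p * h N)"] by (simp add: p_def)
  qed
qed

lemma hstep_tendsto_zero: "hstep tf K \<longlonglongrightarrow> 0"
proof -
  have "hstep tf K = (\<lambda>N. (tf / real K) / real N)" by (simp add: fun_eq_iff hstep_def)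
  then show ?thesis using lim_const_over_n[of "tf / real K"] by simp
qed

lemma eventually_hstep_grid:
  assumes "tf > 0" and "K \<ge> 1" and "i \<ge> 1"
  shows "\<forall>\<^sub>F N in sequentially.
    0 < hstep tf K N \<and> 1 \<le> i * N \<and> real (i * N) * hstep tf K N = real i * (tf / real K)"
  using eventually_ge_at_top[of 1]
  by eventually_elim (use assms in \<open>auto simp: hstep_def field_simps\<close>)

lemma measurable_floor_grid_index:
  "(\<lambda>t. min (nat \<lfloor>t / h\<rfloor>) (c::nat)) \<in> lebesgue_on {a..b::real} \<rightarrow>\<^sub>M count_space UNIV"
proof -
  have "(\<lambda>t. t / h) \<in> borel_measurable (lebesgue_on {a..b})"
    unfolding divide_inverse by (intro continuous_imp_measurable_on_sets_lebesgue continuous_intros) auto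
  then have "(\<lambda>t. \<lfloor>t / h\<rfloor>) \<in> lebesgue_on {a..b} \<rightarrow>\<^sub>M count_space UNIV"
    using measurable_compose[OF _ measurable_real_floor] by blast
  then show ?thesis by measurable
qed

lemma norm1_nonneg: "0 \<le> norm1 v"
  by (simp add: norm1_def sum_nonneg)

lemma norm1_sgnvec_diff_le: "norm1 (sgnvec u - sgnvec v) \<le> 2 * real CARD('m)"
  for u v :: "real^'m"
proof -
  have "norm1 (sgnvec u - sgnvec v) \<le> (\<Sum>\<mu>\<in>(UNIV::'m set). 2)"
    unfolding norm1_def sgnvec_def by (intro sum_mono) (auto simp: sgn_if)
  then show ?thesis by simp
qed

lemma tendsto_norm1_sgnvec_diff:
  fixes x :: "nat \<Rightarrow> real^'m"
  assumes "x \<longlonglongrightarrow> v" and "\<And>\<mu>. v $ \<mu> \<noteq> 0"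
  shows "(\<lambda>N. norm1 (sgnvec v - sgnvec (x N))) \<longlonglongrightarrow> 0"
proof -
  have "(\<lambda>N. \<Sum>\<mu>\<in>UNIV. \<bar>sgn (v $ \<mu>) - sgn (x N $ \<mu>)\<bar>) \<longlonglongrightarrow> (\<Sum>\<mu>\<in>UNIV. \<bar>sgn (v $ \<mu>) - sgn (v $ \<mu>)\<bar>)"
    by (intro tendsto_intros tendsto_sgn tendsto_vec_nth assms)
  then show ?thesis by (simp add: norm1_def sgnvec_def)
qed

lemma norm1_sgnvec_diff_uhat_h_le:
  "\<bar>norm1 (sgnvec v - uhat_h etad Bbar h i N t)\<bar> \<le> 2 * real CARD('m)"
  for v :: "real^'m"
  by (simp add: uhat_h_def norm1_nonneg norm1_sgnvec_diff_le)

lemma tendsto_norm1_sgnvec_diff_uhat_h: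
  fixes Bbar :: "real^'m^'n"
  assumes "(\<lambda>N. etad N (min (nat \<lfloor>t / h N\<rfloor>) (i * N - 1))) \<longlonglongrightarrow> e"
    and "\<And>\<mu>. (e v* Bbar) $ \<mu> \<noteq> 0"
  shows "(\<lambda>N. norm1 (sgnvec (e v* Bbar) - uhat_h (etad N) Bbar (h N) i N t)) \<longlonglongrightarrow> 0"
  unfolding uhat_h_def
  by (intro tendsto_norm1_sgnvec_diff bounded_linear.tendsto[OF bounded_linear_vector_matrix_mult] assms)

lemma integrable_norm1_sgnvec_diff_uhat_h:
  fixes f :: "real \<Rightarrow> real^'m"
  assumes cont: "continuous_on {a..b} f"
  shows "(\<lambda>t. norm1 (sgnvec (f t) - uhat_h etad Bbar h i N t)) integrable_on {a..b}"
proof (rule measurable_bounded_by_integrable_imp_integrable)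
  have "(\<lambda>t. sgn (f t $ \<mu>)) \<in> borel_measurable (lebesgue_on {a..b})" for \<mu>
    by (intro measurable_compose[OF continuous_imp_measurable_on_sets_lebesgue borel_measurable_sgn]
        continuous_intros cont) auto
  moreover have "(\<lambda>t. sgn ((etad (min (nat \<lfloor>t / h\<rfloor>) (i * N - 1)) v* Bbar) $ \<mu>))
      \<in> borel_measurable (lebesgue_on {a..b})" for \<mu>
    by (rule measurable_compose_countable[where f="\<lambda>p t. sgn ((etad p v* Bbar) $ \<mu>)",
          OF _ measurable_floor_grid_index]) simp
  ultimately show "(\<lambda>t. norm1 (sgnvec (f t) - uhat_h etad Bbar h i N t)) \<in> borel_measurable (lebesgue_on {a..b})"
    unfolding norm1_def sgnvec_def uhat_h_def by (simp add: borel_measurable_sum)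
  show "norm (norm1 (sgnvec (f t) - uhat_h etad Bbar h i N t)) \<le> 2 * real CARD('m)" for t
    using norm1_sgnvec_diff_uhat_h_le by simp
qed auto

lemma integral_tendsto_zero_off_finite:
  fixes f :: "nat \<Rightarrow> real \<Rightarrow> real"
  assumes "finite Z"
    and integrable: "\<And>N. f N integrable_on {a..b}"
    and bound: "\<And>N t. t \<in> {a..b} \<Longrightarrow> \<bar>f N t\<bar> \<le> C"
    and lim: "\<And>t. t \<in> {a..b} - Z \<Longrightarrow> (\<lambda>N. f N t) \<longlonglongrightarrow> 0"
  shows "(\<lambda>N. integral {a..b} (f N)) \<longlonglongrightarrow> 0"
proof -
  define g where "g N t = (if t \<in> Z then 0 else f N t)" for N t
  have "integral {a..b} (f N) = integral {a..b} (g N)" for N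
    by (rule integral_spike[OF negligible_finite[OF \<open>finite Z\<close>]]) (simp add: g_def)
  moreover have "(\<lambda>N. integral {a..b} (g N)) \<longlonglongrightarrow> integral {a..b} (\<lambda>_. 0)"
  proof (rule dominated_convergence(2))
    show "g N integrable_on {a..b}" for N
      by (rule integrable_spike_finite[OF \<open>finite Z\<close> _ integrable]) (simp add: g_def)
    show "norm (g N t) \<le> C" if "t \<in> {a..b}" for N t
      using bound[OF that, of N] by (auto simp: g_def)
    show "(\<lambda>N. g N t) \<longlonglongrightarrow> 0" if "t \<in> {a..b}" for t
      using lim[of t] that by (cases "t \<in> Z") (simp_all add: g_def)
  qed (rule integrable_const_ivl)
  ultimately show ?thesis by simp
qed

theorem proposition3p13:
  fixes A :: "real^'n^'n" and B :: "real^'m^'n"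
    and tf :: real and K i :: nat
    and Phi :: "nat \<Rightarrow> real \<Rightarrow> real \<Rightarrow> real^'n^'n"
    and zeta :: "real^'n" and zetah :: "nat \<Rightarrow> real^'n"
    and eta :: "real \<Rightarrow> real^'n"
    and etad :: "nat \<Rightarrow> nat \<Rightarrow> real^'n"
  assumes tf_pos: "tf > 0"
    and K_pos: "K \<ge> 1"
    and i_range: "i \<in> {1..K}"
    and normality: "normality_cond A B"
    and semigroup: "\<forall>N s q r. Phi N s r = Phi N s q ** Phi N q r"
    and zeta_nz: "zeta \<noteq> 0"
    and eta_end: "eta (real i * (tf / real K)) = zeta"
    and eta_ode: "\<forall>t\<in>{0..real i * (tf / real K)}.
        (eta has_vector_derivative (- (eta t v* (- A)))) (at t within {0..real i * (tf / real K)})"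
    and zetah_nz: "\<forall>N. zetah N \<noteq> 0"
    and etad_end: "\<forall>N. etad N (i * N) = zetah N"
    and etad_rec: "\<forall>N p. 1 \<le> p \<and> p \<le> i * N \<longrightarrow>
        etad N (p - 1) = etad N p v* Phi N (real p * hstep tf K N) (real (p - 1) * hstep tf K N)"
    and etad_conv: "\<forall>\<epsilon>>0. \<forall>\<^sub>F N in sequentially. \<forall>p\<le>i * N.
        norm (etad N p - eta (real p * hstep tf K N)) < \<epsilon>"
  shows "(\<lambda>N. integral {0..real i * (tf / real K)}
            (\<lambda>t. norm1 (sgnvec (eta t v* (- B)) - uhat_h (etad N) (- B) (hstep tf K N) i N t)))
         \<longlonglongrightarrow> 0"
proof -
  define T where "T = real i * (tf / real K)"
  have "T > 0" using tf_pos K_pos i_range by (simp add: T_def)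
  have ode: "(eta has_vector_derivative eta t v* A) (at t within {0..T})" if "t \<in> {0..T}" for t
    using eta_ode that by (simp add: T_def vector_matrix_mult_uminus_right)
  have eta_nonzero: "eta t \<noteq> 0" if "t \<in> {0..T}" for t
    using linear_ode_solution_nonzero[OF bounded_linear_vector_matrix_mult ode] eta_end zeta_nz that
      \<open>T > 0\<close> by (simp add: T_def)
  define Z where "Z = (\<Union>\<mu>. {t \<in> {0..T}. (eta t v* B) $ \<mu> = 0})"
  have "finite Z"
    using switching_function_finite_zeros[OF ode eta_nonzero normality] by (simp add: Z_def)
  have cont: "continuous_on {0..T} eta"
    using ode by (meson has_vector_derivative_continuous continuous_on_eq_continuous_within)
  have sample: "(\<lambda>N. etad N (min (nat \<lfloor>t / hstep tf K N\<rfloor>) (i * N - 1))) \<longlonglongrightarrow> eta t"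
    if "t \<in> {0..T}" for t
    using tendsto_grid_sample[OF cont hstep_tendsto_zero, where M = "\<lambda>N. i * N" and yd = etad]
      that etad_conv eventually_hstep_grid[OF tf_pos K_pos] i_range by (simp add: T_def)
  have switching_nonzero: "(eta t v* - B) $ \<mu> \<noteq> 0" if "t \<in> {0..T} - Z" for t \<mu>
    using that by (auto simp: Z_def vector_matrix_mult_uminus_right)
  show ?thesis
    unfolding T_def[symmetric]
  proof (rule integral_tendsto_zero_off_finite[OF \<open>finite Z\<close>])
    show "(\<lambda>t. norm1 (sgnvec (eta t v* - B) - uhat_h (etad N) (- B) (hstep tf K N) i N t))
        integrable_on {0..T}" for N
      by (intro integrable_norm1_sgnvec_diff_uhat_h
          bounded_linear.continuous_on[OF bounded_linear_vector_matrix_mult cont])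
    show "(\<lambda>N. norm1 (sgnvec (eta t v* - B) - uhat_h (etad N) (- B) (hstep tf K N) i N t)) \<longlonglongrightarrow> 0"
      if "t \<in> {0..T} - Z" for t
      using that by (intro tendsto_norm1_sgnvec_diff_uhat_h sample switching_nonzero) auto
  qed (rule norm1_sgnvec_diff_uhat_h_le)
qed

end
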